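(* Let $q$ be a query with sensitivity $\Delta q$, let $k,\theta>0$, and let the random scale $b$ be such that $1/b$ is Gamma distributed with shape $k$ and scale $\theta$ (density $\frac{x^{k-1}e^{-x/\theta}}{\Gamma(k)\theta^k}$ for $x>0$). Then the R$^2$DP Laplace mechanism $\mathcal M_q(d,b)=q(d)+\mathrm{Lap}(b)$ satisfies $\big((k+1)\ln(1+\Delta q\,\theta)\big)$-differential privacy.
   Context: $\mathrm{Lap}(b)$ is the zero-mean Laplace distribution with density $\frac{1}{2b}e^{-|x|/b}$; the R$^2$DP Laplace mechanism draws the random scale $b$ (independently of the data) and then adds $\mathrm{Lap}(b)$ noise to $q(d)$. $\Delta q=\max|q(d)-q(d')|$ over datasets $d,d'$ differing in one individual's data. A mechanism is $\epsilon$-differentially private if $\mathbb P(\mathcal M(d)\in S)\le e^\epsilon\mathbb P(\mathcal M(d')\in S)$ for all such $d,d'$ and measurable $S$. *)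

theory Defs
  imports "HOL-Probability.Probability"
begin

definition gamma_density :: "real \<Rightarrow> real \<Rightarrow> real \<Rightarrow> real" where
  "gamma_density k \<theta> x =
     (if x > 0 then x powr (k - 1) * exp (- x / \<theta>) / (Gamma k * \<theta> powr k) else 0)"

text \<open>Zero-mean Laplace distribution Lap(b) with density exp(-|x|/b)/(2b), for b > 0.
  For b not positive (a null event in the theorem below) we use the point mass at 0,
  only to keep the kernel a probability measure everywhere.\<close>
definition laplace_measure :: "real \<Rightarrow> real measure" where
  "laplace_measure b =
     (if b > 0 then density lborel (\<lambda>x. ennreal (exp (- \<bar>x\<bar> / b) / (2 * b)))
      else return borel 0)"

definition r2dp_laplace :: "real measure \<Rightarrow> ('d \<Rightarrow> real) \<Rightarrow> 'd \<Rightarrow> real measure" where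
  "r2dp_laplace B q d = B \<bind> (\<lambda>b. distr (laplace_measure b) borel (\<lambda>z. q d + z))"

definition differentially_private ::
    "('d \<Rightarrow> 'd \<Rightarrow> bool) \<Rightarrow> ('d \<Rightarrow> real measure) \<Rightarrow> real \<Rightarrow> bool" where
  "differentially_private adj M \<epsilon> \<longleftrightarrow>
     (\<forall>d d' S. adj d d' \<longrightarrow> S \<in> sets borel \<longrightarrow>
        measure (M d) S \<le> exp \<epsilon> * measure (M d') S)"

end

theory Submission
  imports Defs
begin

text \<open>Given the scale b, the output has the Laplace density exp(-|y - q d| / b) / (2b).
  Averaging it over t = 1/b, which is Gamma(k, \<theta>) distributed, is a Gamma integral and gives
  the output density (k / (2 \<theta>^k)) (1/\<theta> + |y - q d|)^(-(k + 1)).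
  Moving the centre q d by at most \<Delta>q changes 1/\<theta> + |y - q d| by at most the factor
  1 + \<Delta>q \<theta>, so the output densities of neighbouring datasets differ by at most the factor
  (1 + \<Delta>q \<theta>)^(k + 1) = exp ((k + 1) ln (1 + \<Delta>q \<theta>)).\<close>

definition laplace_density :: "real \<Rightarrow> real \<Rightarrow> real" where
  "laplace_density b x = exp (- \<bar>x\<bar> / b) / (2 * b)"

lemma borel_measurable_laplace_density [measurable]:
  "(\<lambda>(b, x). laplace_density b x) \<in> borel_measurable (borel \<Otimes>\<^sub>M borel)"
  unfolding laplace_density_def by measurable

lemma nn_integral_exp_neg_abs: "(\<integral>\<^sup>+ x. ennreal (exp (- \<bar>x\<bar>)) \<partial>lborel) = 2"
proof -
  let ?e = "erlang_density 0 (1::real)"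
  have e1: "(\<integral>\<^sup>+ x. ennreal (?e x) \<partial>lborel) = 1"
    using nn_integral_erlang_ith_moment[of 1 0 0] by simp
  have e2: "(\<integral>\<^sup>+ x. ennreal (?e (- x)) \<partial>lborel) = 1"
    using nn_integral_real_affine[of "\<lambda>x. ennreal (?e x)" "-1" 0] e1 by simp
  have "(\<integral>\<^sup>+ x. ennreal (exp (- \<bar>x\<bar>)) \<partial>lborel)
      = (\<integral>\<^sup>+ x. ennreal (?e x) + ennreal (?e (- x)) \<partial>lborel)"
    by (intro nn_integral_cong_AE, rule AE_mp[OF AE_lborel_singleton[of 0]])
       (auto simp: erlang_density_def ennreal_plus[symmetric] simp del: ennreal_plus)
  also have "\<dots> = 2"
    by (subst nn_integral_add) (auto simp: e1 e2 one_add_one)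
  finally show ?thesis .
qed

lemma nn_integral_laplace_density:
  assumes "b > 0"
  shows "(\<integral>\<^sup>+ x. ennreal (laplace_density b x) \<partial>lborel) = 1"
proof -
  have "(\<integral>\<^sup>+ x. ennreal (laplace_density b x) \<partial>lborel)
      = b * (\<integral>\<^sup>+ x. ennreal (laplace_density b (b * x)) \<partial>lborel)"
    using nn_integral_real_affine[of "\<lambda>x. ennreal (laplace_density b x)" b 0] assms
    by (simp add: laplace_density_def)
  also have "\<dots> = b * (\<integral>\<^sup>+ x. ennreal (1 / (2 * b)) * ennreal (exp (- \<bar>x\<bar>)) \<partial>lborel)"
    using assms by (intro arg_cong2[where f = "(*)"] refl nn_integral_cong)
      (simp add: laplace_density_def abs_mult ennreal_mult[symmetric])
  also have "\<dots> = ennreal b * (ennreal (1 / (2 * b)) * ennreal 2)"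
    using assms by (subst nn_integral_cmult) (auto simp: nn_integral_exp_neg_abs)
  also have "\<dots> = ennreal (b * (1 / (2 * b) * 2))"
    using assms by (simp add: ennreal_mult[symmetric] del: ennreal_numeral)
  also have "\<dots> = 1"
    using assms by simp
  finally show ?thesis .
qed

lemma laplace_measure_eq_density:
  "b > 0 \<Longrightarrow> laplace_measure b = density lborel (\<lambda>x. ennreal (laplace_density b x))"
  by (simp add: laplace_measure_def laplace_density_def)

lemma sets_laplace_measure [simp, measurable_cong]: "sets (laplace_measure b) = sets borel"
  by (simp add: laplace_measure_def)

lemma prob_space_laplace_measure: "prob_space (laplace_measure b)"
proof (cases "b > 0")
  case True
  then show ?thesis
    by (intro prob_spaceI) (simp add: laplace_measure_eq_density emeasure_density nn_integral_laplace_density)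
next
  case False
  then show ?thesis
    by (simp add: laplace_measure_def prob_space_return)
qed

lemma emeasure_shifted_laplace:
  assumes "b > 0" and [measurable]: "A \<in> sets borel"
  shows "emeasure (distr (laplace_measure b) borel ((+) c)) A
       = (\<integral>\<^sup>+ y. ennreal (laplace_density b (y - c)) * indicator A y \<partial>lborel)"
proof -
  have "emeasure (distr (laplace_measure b) borel ((+) c)) A
      = (\<integral>\<^sup>+ x. ennreal (laplace_density b x) * indicator A (c + x) \<partial>lborel)"
    using assms measurable_sets[OF _ assms(2), of "(+) c" borel]
    by (simp add: laplace_measure_eq_density emeasure_distr emeasure_density indicator_def)
  also have "\<dots> = (\<integral>\<^sup>+ y. ennreal (laplace_density b (y - c)) * indicator A y \<partial>lborel)"
    using nn_integral_real_affine[of "\<lambda>y. ennreal (laplace_density b (y - c)) * indicator A y" 1 c]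
    by simp
  finally show ?thesis .
qed

lemma shifted_laplace_measurable:
  "(\<lambda>b. distr (laplace_measure b) borel ((+) c)) \<in> borel \<rightarrow>\<^sub>M subprob_algebra borel"
proof (rule measurable_subprob_algebra)
  fix b :: real
  show "subprob_space (distr (laplace_measure b) borel ((+) c))"
    using prob_space_laplace_measure[of b]
    by (intro prob_space_imp_subprob_space prob_space.prob_space_distr) auto
next
  fix A :: "real set" assume [measurable]: "A \<in> sets borel"
  have "emeasure (distr (laplace_measure b) borel ((+) c)) A
      = (if b > 0 then \<integral>\<^sup>+ y. ennreal (laplace_density b (y - c)) * indicator A y \<partial>lborel
         else indicator A c)" for b
    using measurable_sets[OF _ \<open>A \<in> sets borel\<close>, of "(+) c" borel]
    by (simp add: emeasure_shifted_laplace) (simp add: laplace_measure_def emeasure_distr indicator_def)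
  then show "(\<lambda>b. emeasure (distr (laplace_measure b) borel ((+) c)) A) \<in> borel_measurable borel"
    by (simp only:) measurable
qed simp

lemma nn_integral_powr_exp:
  fixes p L :: real
  assumes p: "p > 0" and L: "L > 0"
  shows "(\<integral>\<^sup>+ t. ennreal (if t > 0 then t powr (p - 1) * exp (- L * t) else 0) \<partial>lborel)
       = ennreal (Gamma p * L powr - p)"
proof -
  let ?f = "\<lambda>t. ennreal (if t > 0 then t powr (p - 1) * exp (- L * t) else 0)"
  have "integral\<^sup>N lborel ?f = ennreal (1 / L) * (\<integral>\<^sup>+ s. ?f (s / L) \<partial>lborel)"
    using nn_integral_real_affine[of ?f "1 / L" 0] L by (simp add: mult.commute[of "1 / L"] cong: if_cong)
  also have "(\<integral>\<^sup>+ s. ?f (s / L) \<partial>lborel)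
      = (\<integral>\<^sup>+ s. ennreal (L powr (1 - p)) * ennreal (indicator {0..} s * s powr (p - 1) / exp s) \<partial>lborel)"
  proof (intro nn_integral_cong)
    fix s :: real
    have "(if s / L > 0 then (s / L) powr (p - 1) * exp (- L * (s / L)) else 0)
        = L powr (1 - p) * (indicator {0..} s * s powr (p - 1) / exp s)"
      using L by (auto simp: zero_less_divide_iff powr_divide powr_diff exp_minus field_simps
          indicator_def)
    then show "?f (s / L) = ennreal (L powr (1 - p)) * ennreal (indicator {0..} s * s powr (p - 1) / exp s)"
      by (simp add: ennreal_mult'[symmetric])
  qed
  also have "\<dots> = ennreal (L powr (1 - p)) * ennreal (Gamma p)"
    using Gamma_conv_nn_integral_real[OF p] by (subst nn_integral_cmult) auto
  also have "ennreal (1 / L) * (ennreal (L powr (1 - p)) * ennreal (Gamma p))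
      = ennreal (Gamma p * (L powr (1 - p) / L))"
    using L p by (simp add: ennreal_mult[symmetric] mult_ac)
  also have "L powr (1 - p) / L = L powr - p"
    using L by (simp add: powr_diff powr_minus divide_inverse)
  finally show ?thesis .
qed

lemma gamma_density_nonneg: "k > 0 \<Longrightarrow> \<theta> > 0 \<Longrightarrow> gamma_density k \<theta> x \<ge> 0"
  by (simp add: gamma_density_def)

lemma borel_measurable_gamma_density [measurable]: "gamma_density k \<theta> \<in> borel_measurable borel"
  unfolding gamma_density_def by measurable

lemma gamma_density_mult_exp:
  "gamma_density k \<theta> t * exp (- a * t)
     = 1 / (Gamma k * \<theta> powr k) * (if t > 0 then t powr (k - 1) * exp (- (1 / \<theta> + a) * t) else 0)"
  by (simp add: gamma_density_def exp_add[symmetric] field_simps)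

lemma nn_integral_gamma_density:
  assumes k: "k > 0" and \<theta>: "\<theta> > 0"
  shows "(\<integral>\<^sup>+ t. ennreal (gamma_density k \<theta> t) \<partial>lborel) = 1"
proof -
  have "gamma_density k \<theta> t
      = 1 / (Gamma k * \<theta> powr k) * (if t > 0 then t powr (k - 1) * exp (- (1 / \<theta>) * t) else 0)" for t
    using gamma_density_mult_exp[of k \<theta> t 0] by (simp cong: if_cong)
  then have "(\<integral>\<^sup>+ t. ennreal (gamma_density k \<theta> t) \<partial>lborel)
      = ennreal (1 / (Gamma k * \<theta> powr k))
        * (\<integral>\<^sup>+ t. ennreal (if t > 0 then t powr (k - 1) * exp (- (1 / \<theta>) * t) else 0) \<partial>lborel)"
    using k \<theta> by (subst nn_integral_cmult[symmetric]) (auto simp: ennreal_mult'[symmetric])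
  also have "\<dots> = ennreal (1 / (Gamma k * \<theta> powr k) * (Gamma k * (1 / \<theta>) powr - k))"
    using k \<theta> by (simp add: nn_integral_powr_exp ennreal_mult'[symmetric])
  also have "\<dots> = 1"
    using \<theta> Gamma_real_pos[OF k] by (simp add: powr_minus_divide powr_divide)
  finally show ?thesis .
qed

lemma nn_integral_gamma_density_moment:
  assumes k: "k > 0" and \<theta>: "\<theta> > 0" and a: "a \<ge> 0"
  shows "(\<integral>\<^sup>+ t. ennreal (gamma_density k \<theta> t * t * exp (- a * t)) \<partial>lborel)
       = ennreal (k / \<theta> powr k * (1 / \<theta> + a) powr - (k + 1))"
proof -
  let ?L = "1 / \<theta> + a"
  have L: "?L > 0"
    using \<theta> a by (simp add: add_pos_nonneg)
  have "gamma_density k \<theta> t * t * exp (- a * t)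
      = 1 / (Gamma k * \<theta> powr k) * (if t > 0 then t powr (k + 1 - 1) * exp (- ?L * t) else 0)" for t
    using gamma_density_mult_exp[of k \<theta> t a] by (simp add: powr_diff field_simps)
  then have "(\<integral>\<^sup>+ t. ennreal (gamma_density k \<theta> t * t * exp (- a * t)) \<partial>lborel)
      = ennreal (1 / (Gamma k * \<theta> powr k))
        * (\<integral>\<^sup>+ t. ennreal (if t > 0 then t powr (k + 1 - 1) * exp (- ?L * t) else 0) \<partial>lborel)"
    using k \<theta> by (subst nn_integral_cmult[symmetric]) (auto simp: ennreal_mult'[symmetric])
  also have "\<dots> = ennreal (1 / (Gamma k * \<theta> powr k) * (Gamma (k + 1) * ?L powr - (k + 1)))"
    using k L by (simp add: nn_integral_powr_exp ennreal_mult'[symmetric])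
  also have "Gamma (k + 1) = k * Gamma k"
    using k by (intro Gamma_plus1) (auto simp: nonpos_Ints_def)
  finally show ?thesis
    using Gamma_real_pos[OF k] by simp
qed

text \<open>The density of the noise Lap(b) when 1/b is Gamma(k, \<theta>) distributed.\<close>
definition r2dp_noise_density :: "real \<Rightarrow> real \<Rightarrow> real \<Rightarrow> real" where
  "r2dp_noise_density k \<theta> x = k / (2 * \<theta> powr k) * (1 / \<theta> + \<bar>x\<bar>) powr - (k + 1)"

lemma borel_measurable_r2dp_noise_density [measurable]:
  "r2dp_noise_density k \<theta> \<in> borel_measurable borel"
  unfolding r2dp_noise_density_def by measurable

locale inverse_gamma_scale =
  fixes k \<theta> :: real and B :: "real measure"
  assumes k_pos: "k > 0" and \<theta>_pos: "\<theta> > 0"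
    and sets_B [measurable_cong]: "sets B = sets borel"
    and distr_inverse_B:
      "distr B borel (\<lambda>b. 1 / b) = density lborel (\<lambda>x. ennreal (gamma_density k \<theta> x))"
begin

lemma inverse_measurable: "(\<lambda>b. 1 / b) \<in> B \<rightarrow>\<^sub>M borel"
  by simp

lemma shifted_laplace_measurable_B:
  "(\<lambda>b. distr (laplace_measure b) borel ((+) c)) \<in> B \<rightarrow>\<^sub>M subprob_algebra borel"
  using shifted_laplace_measurable by (simp add: measurable_cong_sets[OF sets_B refl])

lemma prob_space_B: "prob_space B"
proof (rule prob_spaceI)
  have "emeasure B (space B) = emeasure (distr B borel (\<lambda>b. 1 / b)) UNIV"
    using sets_eq_imp_space_eq[OF sets_B] by (simp add: emeasure_distr)
  also have "\<dots> = 1"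
    using k_pos \<theta>_pos by (simp add: distr_inverse_B emeasure_density nn_integral_gamma_density)
  finally show "emeasure B (space B) = 1" .
qed

lemma AE_pos: "AE b in B. b > 0"
proof -
  have "AE t in distr B borel (\<lambda>b. 1 / b). t > 0"
    unfolding distr_inverse_B by (subst AE_density) (auto simp: gamma_density_def)
  then show ?thesis
    by (subst (asm) AE_distr_iff[OF inverse_measurable]) auto
qed

lemma nn_integral_laplace_density_B:
  "(\<integral>\<^sup>+ b. ennreal (laplace_density b x) \<partial>B) = ennreal (r2dp_noise_density k \<theta> x)"
proof -
  have "(\<integral>\<^sup>+ b. ennreal (laplace_density b x) \<partial>B)
      = (\<integral>\<^sup>+ b. ennreal (1 / 2) * ennreal (1 / b * exp (- \<bar>x\<bar> * (1 / b))) \<partial>B)"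
  proof (intro nn_integral_cong_AE, use AE_pos in \<open>eventually_elim\<close>)
    fix b :: real assume "b > 0"
    then show "ennreal (laplace_density b x) = ennreal (1 / 2) * ennreal (1 / b * exp (- \<bar>x\<bar> * (1 / b)))"
      by (subst ennreal_mult'[symmetric]) (auto simp: laplace_density_def)
  qed
  also have "\<dots> = ennreal (1 / 2) * (\<integral>\<^sup>+ t. ennreal (t * exp (- \<bar>x\<bar> * t)) \<partial>distr B borel (\<lambda>b. 1 / b))"
    by (subst nn_integral_cmult) (auto simp: nn_integral_distr)
  also have "\<dots> = ennreal (1 / 2) * (\<integral>\<^sup>+ t. ennreal (gamma_density k \<theta> t * t * exp (- \<bar>x\<bar> * t)) \<partial>lborel)"
    using k_pos \<theta>_pos
    by (simp add: distr_inverse_B nn_integral_density gamma_density_nonneg ennreal_mult'[symmetric] mult.assoc)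
  also have "\<dots> = ennreal (r2dp_noise_density k \<theta> x)"
    unfolding nn_integral_gamma_density_moment[OF k_pos \<theta>_pos abs_ge_zero]
    by (subst ennreal_mult'[symmetric]) (simp_all add: r2dp_noise_density_def)
  finally show ?thesis .
qed

lemma r2dp_laplace_eq_density:
  "r2dp_laplace B q d = density lborel (\<lambda>y. ennreal (r2dp_noise_density k \<theta> (y - q d)))"
proof (rule measure_eqI)
  note kernel = shifted_laplace_measurable_B[of "q d"]
  then show "sets (r2dp_laplace B q d) = sets (density lborel (\<lambda>y. ennreal (r2dp_noise_density k \<theta> (y - q d))))"
    unfolding r2dp_laplace_def by (subst sets_bind[where N = borel]) (auto simp: sets_eq_imp_space_eq[OF sets_B])
  fix S assume "S \<in> sets (r2dp_laplace B q d)"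
  then have [measurable]: "S \<in> sets borel"
    unfolding r2dp_laplace_def by (subst (asm) sets_bind[where N = borel]) (auto simp: kernel sets_eq_imp_space_eq[OF sets_B])
  interpret pair_sigma_finite B lborel
    using prob_space_B by (intro pair_sigma_finite.intro prob_space_imp_sigma_finite lborel.sigma_finite_measure_axioms)
  have "emeasure (r2dp_laplace B q d) S
      = (\<integral>\<^sup>+ b. emeasure (distr (laplace_measure b) borel ((+) (q d))) S \<partial>B)"
    unfolding r2dp_laplace_def using kernel by (subst emeasure_bind) (auto simp: sets_eq_imp_space_eq[OF sets_B])
  also have "\<dots> = (\<integral>\<^sup>+ b. \<integral>\<^sup>+ y. ennreal (laplace_density b (y - q d)) * indicator S y \<partial>lborel \<partial>B)"
    using AE_pos by (intro nn_integral_cong_AE) (auto elim!: eventually_mono simp: emeasure_shifted_laplace)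
  also have "\<dots> = (\<integral>\<^sup>+ y. \<integral>\<^sup>+ b. ennreal (laplace_density b (y - q d)) * indicator S y \<partial>B \<partial>lborel)"
    by (intro Fubini'[symmetric]) (unfold laplace_density_def, measurable)
  also have "\<dots> = (\<integral>\<^sup>+ y. ennreal (r2dp_noise_density k \<theta> (y - q d)) * indicator S y \<partial>lborel)"
    by (simp add: nn_integral_multc nn_integral_laplace_density_B)
  also have "\<dots> = emeasure (density lborel (\<lambda>y. ennreal (r2dp_noise_density k \<theta> (y - q d)))) S"
    by (simp add: emeasure_density)
  finally show "emeasure (r2dp_laplace B q d) S = \<dots>" .
qed

lemma prob_space_r2dp_laplace: "prob_space (r2dp_laplace B q d)"
  unfolding r2dp_laplace_def
  by (rule prob_space.prob_space_bind[OF prob_space_B, where S = borel])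
    (auto simp: prob_space_laplace_measure prob_space.prob_space_distr shifted_laplace_measurable_B)

end

lemma r2dp_noise_density_shift_le:
  assumes k: "k > 0" and \<theta>: "\<theta> > 0" and shift: "\<bar>x' - x\<bar> \<le> \<Delta>"
  shows "r2dp_noise_density k \<theta> x \<le> (1 + \<Delta> * \<theta>) powr (k + 1) * r2dp_noise_density k \<theta> x'"
proof -
  let ?R = "1 + \<Delta> * \<theta>"
  have \<Delta>: "\<Delta> \<ge> 0"
    using shift by linarith
  have pos: "1 / \<theta> + \<bar>x\<bar> > 0" "1 / \<theta> + \<bar>x'\<bar> > 0" "?R > 0"
    using \<theta> \<Delta> by (auto intro: add_pos_nonneg)
  have "?R * (1 / \<theta> + \<bar>x\<bar>) = 1 / \<theta> + \<bar>x\<bar> + \<Delta> + \<Delta> * \<theta> * \<bar>x\<bar>"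
    using \<theta> by (simp add: field_simps)
  moreover have "\<Delta> * \<theta> * \<bar>x\<bar> \<ge> 0"
    using \<theta> \<Delta> by simp
  moreover have "\<bar>x'\<bar> \<le> \<bar>x\<bar> + \<Delta>"
    using shift by linarith
  ultimately have "1 / \<theta> + \<bar>x'\<bar> \<le> ?R * (1 / \<theta> + \<bar>x\<bar>)"
    by linarith
  then have "(1 / \<theta> + \<bar>x'\<bar>) powr (k + 1) \<le> ?R powr (k + 1) * (1 / \<theta> + \<bar>x\<bar>) powr (k + 1)"
    using pos k by (simp add: powr_mono2 powr_mult[symmetric])
  then have "1 / (1 / \<theta> + \<bar>x\<bar>) powr (k + 1) \<le> ?R powr (k + 1) / (1 / \<theta> + \<bar>x'\<bar>) powr (k + 1)"
    using pos by (simp add: divide_simps mult.commute)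
  then have "(1 / \<theta> + \<bar>x\<bar>) powr - (k + 1) \<le> ?R powr (k + 1) * (1 / \<theta> + \<bar>x'\<bar>) powr - (k + 1)"
    by (simp only: powr_minus divide_inverse mult_1_left)
  moreover have "k / (2 * \<theta> powr k) \<ge> 0"
    using k by simp
  ultimately show ?thesis
    unfolding r2dp_noise_density_def by (subst mult.left_commute) (rule mult_left_mono)
qed

lemma differentially_private_densityI:
  fixes M :: "'d \<Rightarrow> real measure" and f :: "'d \<Rightarrow> real \<Rightarrow> real"
  assumes density: "\<And>d. M d = density lborel (\<lambda>y. ennreal (f d y))"
    and measurable_f: "\<And>d. f d \<in> borel_measurable borel"
    and prob: "\<And>d. prob_space (M d)"
    and ratio: "\<And>d d' y. adj d d' \<Longrightarrow> f d y \<le> exp \<epsilon> * f d' y"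
  shows "differentially_private adj M \<epsilon>"
  unfolding differentially_private_def
proof (intro allI impI)
  fix d d' and S :: "real set" assume "adj d d'" and S: "S \<in> sets borel"
  have "emeasure (M d) S = (\<integral>\<^sup>+ y. ennreal (f d y) * indicator S y \<partial>lborel)"
    using S measurable_f by (simp add: density emeasure_density)
  also have "\<dots> \<le> (\<integral>\<^sup>+ y. ennreal (exp \<epsilon>) * (ennreal (f d' y) * indicator S y) \<partial>lborel)"
    using ratio[OF \<open>adj d d'\<close>]
    by (intro nn_integral_mono) (auto simp: ennreal_mult'[symmetric] mult.assoc[symmetric]
        intro!: mult_right_mono ennreal_leI)
  also have "\<dots> = ennreal (exp \<epsilon>) * emeasure (M d') S"
    using S measurable_f by (simp add: density emeasure_density nn_integral_cmult)
  finally have le: "emeasure (M d) S \<le> ennreal (exp \<epsilon>) * emeasure (M d') S" .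
  interpret Md: prob_space "M d" by (rule prob)
  interpret Md': prob_space "M d'" by (rule prob)
  have "ennreal (measure (M d) S) \<le> ennreal (exp \<epsilon> * measure (M d') S)"
    using le by (simp add: Md.emeasure_eq_measure Md'.emeasure_eq_measure ennreal_mult)
  then show "measure (M d) S \<le> exp \<epsilon> * measure (M d') S"
    by (subst (asm) ennreal_le_iff) auto
qed

theorem theoremB3:
  fixes adj :: "'d \<Rightarrow> 'd \<Rightarrow> bool" and q :: "'d \<Rightarrow> real"
    and \<Delta>q k \<theta> :: real and B :: "real measure"
  assumes sens_bound: "\<forall>d d'. adj d d' \<longrightarrow> \<bar>q d - q d'\<bar> \<le> \<Delta>q"
    and sens_attained: "\<exists>d d'. adj d d' \<and> \<bar>q d - q d'\<bar> = \<Delta>q"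
    and k_pos: "k > 0" and \<theta>_pos: "\<theta> > 0"
    and B_sets: "sets B = sets borel"
    and B_gamma: "distr B borel (\<lambda>b. 1 / b) = density lborel (\<lambda>x. ennreal (gamma_density k \<theta> x))"
  shows "differentially_private adj (r2dp_laplace B q) ((k + 1) * ln (1 + \<Delta>q * \<theta>))"
proof -
  interpret inverse_gamma_scale k \<theta> B
    using k_pos \<theta>_pos B_sets B_gamma by unfold_locales
  have "\<Delta>q \<ge> 0"
    using sens_attained by auto
  then have "1 + \<Delta>q * \<theta> > 0"
    using \<theta>_pos by (intro add_pos_nonneg) auto
  then have exp_\<epsilon>: "exp ((k + 1) * ln (1 + \<Delta>q * \<theta>)) = (1 + \<Delta>q * \<theta>) powr (k + 1)"
    by (simp add: powr_def)
  show ?thesis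
  proof (rule differentially_private_densityI)
    fix d d' y assume "adj d d'"
    then have "\<bar>(y - q d') - (y - q d)\<bar> \<le> \<Delta>q"
      using sens_bound by auto
    then show "r2dp_noise_density k \<theta> (y - q d)
        \<le> exp ((k + 1) * ln (1 + \<Delta>q * \<theta>)) * r2dp_noise_density k \<theta> (y - q d')"
      unfolding exp_\<epsilon> by (rule r2dp_noise_density_shift_le[OF k_pos \<theta>_pos])
  qed (auto intro: r2dp_laplace_eq_density prob_space_r2dp_laplace)
qed

end
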